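(* If an analytic function $f(z)=\sum_{n\ge0}f_nz^n$ on $\mathbb{D}$ satisfies $\sup_{n\ge0}|f_n|e^{c\sqrt n}<\infty$ for some $c>0$, then for every $h\in H^\infty$ the function $T_{\overline h}f$ also satisfies $\sup_{n\ge0}|(T_{\overline h}f)_n|e^{c''\sqrt n}<\infty$ for some $c''>0$, where $(T_{\overline h}f)_n$ are its Taylor coefficients.
   Context: $H^\infty$ is the algebra of bounded analytic functions on $\mathbb{D}$. For $h\in H^\infty$ and $f\in H^2$, $T_{\overline h}f=P_+(\overline hf)$, where $P_+:L^2(\mathbb{T})\to H^2$ is the orthogonal projection onto the Hardy space (such $f$ lies in $H^2$). *)

theory Defs
  imports "HOL-Analysis.Analysis"
begin

definition taylor_coeff :: "(complex \<Rightarrow> complex) \<Rightarrow> nat \<Rightarrow> complex" where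
  "taylor_coeff f n = (deriv ^^ n) f 0 / fact n"

definition Hinf :: "(complex \<Rightarrow> complex) set" where
  "Hinf = {h. h holomorphic_on ball 0 1 \<and> bounded (h ` ball 0 1)}"

text \<open>Co-analytic Toeplitz operator T_{conj h} f = P_+(conj h * f).  In the
  orthonormal basis z^n of H^2, the n-th Fourier coefficient of conj h * f is
  sum_k conj(h_k) f_(n+k); P_+ keeps the coefficients with n >= 0.  The result is
  the analytic function on the disc with these Taylor coefficients.\<close>
definition toeplitz_conj_coeff ::
  "(complex \<Rightarrow> complex) \<Rightarrow> (complex \<Rightarrow> complex) \<Rightarrow> nat \<Rightarrow> complex" where
  "toeplitz_conj_coeff h f n = (\<Sum>k. cnj (taylor_coeff h k) * taylor_coeff f (n + k))"

definition toeplitz_conj ::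
  "(complex \<Rightarrow> complex) \<Rightarrow> (complex \<Rightarrow> complex) \<Rightarrow> complex \<Rightarrow> complex" where
  "toeplitz_conj h f z = (\<Sum>n. toeplitz_conj_coeff h f n * z ^ n)"

end

theory Submission
  imports Defs "HOL-Complex_Analysis.Complex_Analysis" "HOL-Real_Asymp.Real_Asymp"
begin

text \<open>With h_k and f_m the Taylor coefficients, the coefficients of T_{conj h} f are the
  correlations b_n = sum_k conj(h_k) f_(n+k).  Cauchy's estimate bounds |h_k| by the sup norm B
  of h, and since sqrt(n+k) >= (sqrt n + sqrt k)/2, the decay |f_m| <= M exp(-c sqrt m) gives
  |b_n| <= B M exp(-c sqrt n / 2) sum_k exp(-c sqrt k / 2), a convergent sum.  So c'' = c/2
  works; in particular b is bounded, so the power series defining T_{conj h} f converges near 0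
  and its Taylor coefficients are indeed the b_n.\<close>

lemma summable_exp_neg_mult_sqrt:
  fixes d :: real
  assumes "d > 0"
  shows "summable (\<lambda>n. exp (- d * sqrt (real n)))"
proof (rule summable_comparison_test_bigo)
  show "summable (\<lambda>n. norm (real n powr -2))"
    by (simp add: summable_real_powr_iff)
  show "(\<lambda>n. exp (- d * sqrt (real n))) \<in> O(\<lambda>n. real n powr -2)"
    using assms by real_asymp
qed

lemma norm_taylor_coeff_le:
  assumes "R > 0"
    and hol: "h holomorphic_on ball 0 R"
    and bound: "\<And>z. z \<in> ball 0 R \<Longrightarrow> norm (h z) \<le> B"
  shows "norm (taylor_coeff h k) \<le> B / R ^ k"
proof (rule tendsto_le[of "at_left R"])
  show "((\<lambda>r. B / r ^ k) \<longlongrightarrow> B / R ^ k) (at_left R)"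
    using \<open>R > 0\<close> by (intro tendsto_intros) auto
  show "\<forall>\<^sub>F r in at_left R. norm (taylor_coeff h k) \<le> B / r ^ k"
    using eventually_at_left_real[OF \<open>R > 0\<close>]
  proof (rule eventually_mono)
    fix r assume r: "r \<in> {0<..<R}"
    have "norm ((deriv ^^ k) h 0) \<le> fact k * B / r ^ k"
    proof (rule Cauchy_inequality)
      show "h holomorphic_on ball 0 r"
        using r by (auto intro: holomorphic_on_subset[OF hol])
      show "continuous_on (cball 0 r) h"
        using r by (intro holomorphic_on_imp_continuous_on holomorphic_on_subset[OF hol]) auto
      show "norm (h z) \<le> B" if "norm (0 - z) = r" for z
        using that r by (intro bound) auto
    qed (use r in auto)
    then show "norm (taylor_coeff h k) \<le> B / r ^ k"
      by (simp add: taylor_coeff_def norm_divide field_simps)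
  qed
qed (use \<open>R > 0\<close> in auto)

lemma taylor_coeff_power_series:
  fixes b :: "nat \<Rightarrow> complex"
  assumes "Bseq b"
  shows "taylor_coeff (\<lambda>z. \<Sum>n. b n * z ^ n) n = b n"
proof -
  obtain K where K: "\<And>n. norm (b n) \<le> K"
    using assms by (auto simp: Bseq_def)
  have "summable (\<lambda>n. b n * (1/2) ^ n)"
  proof (rule summable_comparison_test'[where g = "\<lambda>n. K * (1/2) ^ n"])
    show "summable (\<lambda>n. K * (1/2::real) ^ n)"
      by (intro summable_mult) auto
    show "norm (b n * (1/2) ^ n) \<le> K * (1/2) ^ n" for n
      using K[of n] by (simp add: norm_mult norm_power mult_right_mono)
  qed
  then have "fps_conv_radius (Abs_fps b) \<ge> norm (1/2 :: complex)"
    unfolding fps_conv_radius_def by (intro conv_radius_geI) simp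
  then have "fps_conv_radius (Abs_fps b) > 0"
    by (rule less_le_trans[rotated]) simp
  then have "eval_fps (Abs_fps b) has_fps_expansion Abs_fps b"
    by (rule eval_fps_has_fps_expansion)
  moreover have "eval_fps (Abs_fps b) = (\<lambda>z. \<Sum>n. b n * z ^ n)"
    by (simp add: eval_fps_def fun_eq_iff)
  ultimately show ?thesis
    using fps_nth_fps_expansion[of "\<lambda>z. \<Sum>n. b n * z ^ n" "Abs_fps b" n]
    by (simp add: taylor_coeff_def)
qed

lemma sqrt_exp_decay_correlation:
  fixes a g :: "nat \<Rightarrow> 'a :: {banach, real_normed_div_algebra}"
  assumes "c > 0"
    and a: "\<And>k. norm (a k) \<le> B"
    and g: "\<And>m. norm (g m) * exp (c * sqrt (real m)) \<le> M"
  shows "\<exists>K. \<forall>n. norm (\<Sum>k. a k * g (n + k)) * exp (c / 2 * sqrt (real n)) \<le> K"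
proof -
  define d where "d = c / 2"
  define S where "S = (\<Sum>k. exp (- d * sqrt (real k)))"
  have "d > 0"
    using \<open>c > 0\<close> by (simp add: d_def)
  then have summable_S: "summable (\<lambda>k. exp (- d * sqrt (real k)))"
    by (rule summable_exp_neg_mult_sqrt)
  have "B \<ge> 0"
    using a[of 0] norm_ge_zero order_trans by blast
  have "M \<ge> 0"
    using order_trans[OF norm_ge_zero, of "g 0" M] g[of 0] by simp
  have decay: "norm (g m) \<le> M * exp (- c * sqrt (real m))" for m
  proof -
    have "norm (g m) = norm (g m) * exp (c * sqrt (real m)) * exp (- c * sqrt (real m))"
      by (simp add: mult.assoc flip: exp_add)
    also have "\<dots> \<le> M * exp (- c * sqrt (real m))"
      using g[of m] by (intro mult_right_mono) auto
    finally show ?thesis .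
  qed
  have term_bound: "norm (a k * g (n + k))
      \<le> B * M * exp (- d * sqrt (real n)) * exp (- d * sqrt (real k))" for n k
  proof -
    have "d * sqrt (real n) \<le> d * sqrt (real (n + k))" "d * sqrt (real k) \<le> d * sqrt (real (n + k))"
      using \<open>d > 0\<close> by (intro mult_left_mono; simp)+
    moreover have "c * sqrt (real (n + k)) = d * sqrt (real (n + k)) + d * sqrt (real (n + k))"
      by (simp add: d_def)
    ultimately have "- c * sqrt (real (n + k)) \<le> - d * sqrt (real n) + - d * sqrt (real k)"
      by linarith
    then have "exp (- c * sqrt (real (n + k))) \<le> exp (- d * sqrt (real n)) * exp (- d * sqrt (real k))"
      by (simp flip: exp_add)
    then have "norm (g (n + k)) \<le> M * (exp (- d * sqrt (real n)) * exp (- d * sqrt (real k)))"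
      using decay[of "n + k"] \<open>M \<ge> 0\<close> by (meson mult_left_mono order_trans)
    then show ?thesis
      using a[of k] \<open>B \<ge> 0\<close> by (simp add: norm_mult mult_mono' mult.assoc)
  qed
  have "norm (\<Sum>k. a k * g (n + k)) * exp (d * sqrt (real n)) \<le> B * M * S" for n
  proof -
    have "norm (\<Sum>k. a k * g (n + k))
        \<le> (\<Sum>k. B * M * exp (- d * sqrt (real n)) * exp (- d * sqrt (real k)))"
      by (rule norm_suminf_le[OF term_bound]) (intro summable_mult summable_S)
    also have "\<dots> = B * M * exp (- d * sqrt (real n)) * S"
      unfolding S_def by (rule suminf_mult[OF summable_S])
    finally have "norm (\<Sum>k. a k * g (n + k)) * exp (d * sqrt (real n))
        \<le> B * M * exp (- d * sqrt (real n)) * S * exp (d * sqrt (real n))"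
      by (intro mult_right_mono) auto
    then show ?thesis
      by (simp add: mult_ac flip: exp_add)
  qed
  then show ?thesis
    unfolding d_def by blast
qed

theorem mainTheorem15:
  fixes f :: "complex \<Rightarrow> complex" and c :: real
  assumes "f holomorphic_on ball 0 1"
    and "c > 0"
    and "\<exists>M. \<forall>n. norm (taylor_coeff f n) * exp (c * sqrt (real n)) \<le> M"
  shows "\<forall>h \<in> Hinf. \<exists>c''>0. \<exists>M. \<forall>n.
           norm (taylor_coeff (toeplitz_conj h f) n) * exp (c'' * sqrt (real n)) \<le> M"
proof
  fix h assume "h \<in> Hinf"
  then have "h holomorphic_on ball 0 1" "bounded (h ` ball 0 1)"
    by (auto simp: Hinf_def)
  moreover obtain B where "\<And>z. z \<in> ball 0 1 \<Longrightarrow> norm (h z) \<le> B"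
    using \<open>bounded (h ` ball 0 1)\<close> unfolding bounded_iff by blast
  ultimately have h_coeff: "norm (cnj (taylor_coeff h k)) \<le> B" for k
    using norm_taylor_coeff_le[of 1 h B k] by simp
  obtain M where "\<And>n. norm (taylor_coeff f n) * exp (c * sqrt (real n)) \<le> M"
    using assms(3) by blast
  from sqrt_exp_decay_correlation[where a = "\<lambda>k. cnj (taylor_coeff h k)", OF \<open>c > 0\<close> h_coeff this]
  obtain K where K: "\<And>n. norm (toeplitz_conj_coeff h f n) * exp (c / 2 * sqrt (real n)) \<le> K"
    unfolding toeplitz_conj_coeff_def by blast
  have "norm (toeplitz_conj_coeff h f n) \<le> K" for n
  proof -
    have "1 \<le> exp (c / 2 * sqrt (real n))"
      using \<open>c > 0\<close> by simp
    then have "norm (toeplitz_conj_coeff h f n) \<le> norm (toeplitz_conj_coeff h f n) * exp (c / 2 * sqrt (real n))"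
      by (metis mult.right_neutral mult_left_mono norm_ge_zero)
    with K[of n] show ?thesis
      by linarith
  qed
  then have "Bseq (toeplitz_conj_coeff h f)"
    by (rule BseqI')
  then have "taylor_coeff (toeplitz_conj h f) n = toeplitz_conj_coeff h f n" for n
    using taylor_coeff_power_series unfolding toeplitz_conj_def[abs_def] by blast
  with K \<open>c > 0\<close> show "\<exists>c''>0. \<exists>M. \<forall>n.
      norm (taylor_coeff (toeplitz_conj h f) n) * exp (c'' * sqrt (real n)) \<le> M"
    by (intro exI[of _ "c / 2"]) auto
qed

end
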